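(* Let $k\in\{1,2,4\}$, let $\mu:X\times Y\to Z$ be an isometric bilinear map of Euclidean spaces with $0<\dim X\le\dim Y=\dim Z=k$, let $\mathbb A$ be the normed division algebra of dimension $k$ ($\mathbb R$, $\mathbb C$ or $\mathbb H$), and let $W\subset\mathbb A$ be a real subspace with $\dim W=\dim X$. (a) There exist linear isometries $\varphi_X:X\to W$, $\varphi_Y:Y\to\mathbb A$, $\varphi_Z:Z\to\mathbb A$ with $\varphi_Z(\mu(x,y))=\varphi_X(x)\varphi_Y(y)$ for all $x\in X,y\in Y$. (b) If moreover $1\in W$, then for any unit vectors $e_X\in X$, $e_Y\in Y$ such isometries can be chosen with additionally $\varphi_X(e_X)=1$ and $\varphi_Y(e_Y)=1$.
   Context: A bilinear map $\mu:X\times Y\to Z$ of finite-dimensional real Euclidean spaces is isometric if $|\mu(x,y)|=|x|\,|y|$ for all $x,y$. $\mathbb R,\mathbb C,\mathbb H$ carry their standard Euclidean norms and multiplications. *)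

theory Defs
  imports "HOL-Analysis.Analysis"
begin

definition isometric_bilinear :: "('x::real_normed_vector \<Rightarrow> 'y::real_normed_vector \<Rightarrow> 'z::real_normed_vector) \<Rightarrow> bool" where
  "isometric_bilinear \<mu> \<longleftrightarrow> bilinear \<mu> \<and> (\<forall>x y. norm (\<mu> x y) = norm x * norm y)"

definition lin_isometry :: "('a::real_normed_vector \<Rightarrow> 'b::real_normed_vector) \<Rightarrow> bool" where
  "lin_isometry f \<longleftrightarrow> linear f \<and> (\<forall>x. norm (f x) = norm x)"

text \<open>The quaternions H, realised via Cayley-Dickson as pairs of complex numbers
  (a,b) = a + b j, with the standard Euclidean norm of complex \<times> complex
  (= sqrt(|a|^2+|b|^2)) and the quaternion product.\<close>

type_synonym quat = "complex \<times> complex"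

definition qmult :: "quat \<Rightarrow> quat \<Rightarrow> quat" where
  "qmult p q = (fst p * fst q - cnj (snd q) * snd p, snd q * fst p + snd p * cnj (fst q))"

definition qone :: quat where
  "qone = (1, 0)"

definition factorizes_through ::
  "('a::real_normed_vector \<Rightarrow> 'a \<Rightarrow> 'a) \<Rightarrow> ('x::real_normed_vector \<Rightarrow> 'y::real_normed_vector \<Rightarrow> 'z::real_normed_vector)
   \<Rightarrow> 'a set \<Rightarrow> bool" where
  "factorizes_through m \<mu> W \<longleftrightarrow>
     (\<exists>\<phi>X \<phi>Y \<phi>Z. lin_isometry \<phi>X \<and> range \<phi>X \<subseteq> W \<and> lin_isometry \<phi>Y \<and> lin_isometry \<phi>Z \<and>
        (\<forall>x y. \<phi>Z (\<mu> x y) = m (\<phi>X x) (\<phi>Y y)))"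

definition factorizes_through_normalized ::
  "('a::real_normed_vector \<Rightarrow> 'a \<Rightarrow> 'a) \<Rightarrow> 'a \<Rightarrow> ('x::real_normed_vector \<Rightarrow> 'y::real_normed_vector \<Rightarrow> 'z::real_normed_vector)
   \<Rightarrow> 'a set \<Rightarrow> bool" where
  "factorizes_through_normalized m e \<mu> W \<longleftrightarrow>
     (\<forall>eX eY. norm eX = 1 \<and> norm eY = 1 \<longrightarrow>
       (\<exists>\<phi>X \<phi>Y \<phi>Z. lin_isometry \<phi>X \<and> range \<phi>X \<subseteq> W \<and> lin_isometry \<phi>Y \<and> lin_isometry \<phi>Z \<and>
          (\<forall>x y. \<phi>Z (\<mu> x y) = m (\<phi>X x) (\<phi>Y y)) \<and> \<phi>X eX = e \<and> \<phi>Y eY = e))"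

end

theory Submission
  imports Defs
begin

text \<open>Fix unit vectors \<open>eX\<close>, \<open>eY\<close> and replace \<open>\<mu>\<close> by \<open>\<nu> x z = \<mu> x (L\<inverse> z)\<close> with
  \<open>L = \<mu> eX\<close>, so that \<open>\<nu> eX\<close> is the identity. Polarising \<open>|\<nu> x z| = |x| |z|\<close> shows that for
  \<open>x \<bottom> eX\<close> the operators \<open>\<nu> x\<close> are skew, square to \<open>-|x|\<^sup>2\<close> and anticommute for orthogonal
  \<open>x\<close>: they are Clifford relations, i.e. complex or quaternionic structures on \<open>Z\<close>. For orthonormal
  \<open>x1, x2 \<bottom> eX\<close> and orthonormal imaginary units \<open>w1, w2 \<in> W\<close> the isometry sending the frame
  \<open>z0, \<nu> x1 z0, \<nu> x2 z0, \<nu> x1 (\<nu> x2 z0)\<close> to \<open>1, w1, w2, w1 w2\<close> turns each \<open>\<nu> xi\<close> into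
  left multiplication by \<open>wi\<close>; a third structure is forced to be a multiple of \<open>\<nu> x1 \<circ> \<nu> x2\<close>,
  and linearity in \<open>x\<close> does the rest. This gives part (b); part (a) reduces to it by moving \<open>W\<close>
  with left multiplication by a unit vector of \<open>W\<close>, which then contains \<open>1\<close>.\<close>

section \<open>Quaternion arithmetic\<close>

lemma inner_Complex: "inner (Complex a b) (Complex c d) = a * c + b * d"
  by (simp add: inner_complex_def)

lemma quat_cases: obtains a1 a2 b1 b2 where "p = (Complex a1 a2, Complex b1 b2)"
  by (metis complex.exhaust prod.exhaust)

lemma qmult_Complex:
  "qmult (Complex a1 a2, Complex b1 b2) (Complex c1 c2, Complex d1 d2) =
    (Complex (a1*c1 - a2*c2 - d1*b1 - d2*b2) (a1*c2 + a2*c1 - d1*b2 + d2*b1),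
     Complex (d1*a1 - d2*a2 + b1*c1 + b2*c2) (d1*a2 + d2*a1 + b2*c1 - b1*c2))"
  by (simp add: qmult_def complex_eq_iff)

lemma qone_Complex: "qone = (Complex 1 0, Complex 0 0)"
  by (simp add: qone_def complex_eq_iff)

lemma qmult_assoc: "qmult (qmult p q) r = qmult p (qmult q r)"
  by (cases p rule: quat_cases, cases q rule: quat_cases, cases r rule: quat_cases)
    (simp add: qmult_Complex complex_eq_iff algebra_simps)

lemma qmult_qone_left: "qmult qone p = p" and qmult_qone_right: "qmult p qone = p"
  by (simp_all add: qmult_def qone_def)

lemma qmult_bilinear: "bilinear qmult"
  unfolding bilinear_def
  by (auto intro!: linearI simp: qmult_def algebra_simps scaleR_conv_of_real)

lemma linear_qmult_right: "linear (qmult p)"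
  using qmult_bilinear unfolding bilinear_def by blast

lemma qmult_minus_left: "qmult (- p) q = - qmult p q"
  and qmult_minus_right: "qmult p (- q) = - qmult p q"
  and qmult_scaleR_left: "qmult (c *\<^sub>R p) q = c *\<^sub>R qmult p q"
  by (simp_all add: bilinear_lneg bilinear_rneg bilinear_lmul qmult_bilinear)

lemma inner_qmult_self: "inner (qmult p q) (qmult p q) = inner p p * inner q q"
  by (cases p rule: quat_cases, cases q rule: quat_cases)
    (simp add: qmult_Complex inner_Complex algebra_simps)

lemma norm_qmult: "norm (qmult p q) = norm p * norm q"
  by (simp add: norm_eq_sqrt_inner inner_qmult_self real_sqrt_mult)

text \<open>Below, \<open>inner w qone = 0\<close> says that \<open>w\<close> is a purely imaginary quaternion.\<close>

lemma qmult_imaginary_self: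
  assumes "inner w qone = 0" "inner w w = 1"
  shows "qmult w w = - qone"
  using assms by (cases w rule: quat_cases) (simp add: qmult_Complex qone_Complex inner_Complex complex_eq_iff)

lemma qmult_imaginary_anticommute:
  assumes "inner w qone = 0" "inner v qone = 0" "inner w v = 0"
  shows "qmult v w = - qmult w v"
  using assms by (cases w rule: quat_cases, cases v rule: quat_cases)
    (simp add: qmult_Complex qone_Complex inner_Complex complex_eq_iff algebra_simps)

lemma qmult_imaginary_orthogonal:
  assumes "inner w qone = 0" "inner v qone = 0" "inner w v = 0"
  shows "inner (qmult w v) qone = 0" "inner (qmult w v) w = 0" "inner (qmult w v) v = 0"
proof -
  obtain a1 a2 b1 b2 c1 c2 d1 d2 where "w = (Complex a1 a2, Complex b1 b2)" "v = (Complex c1 c2, Complex d1 d2)"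
    by (metis quat_cases)
  with assms show "inner (qmult w v) qone = 0" "inner (qmult w v) w = 0" "inner (qmult w v) v = 0"
    by (simp_all add: qmult_Complex qone_Complex inner_Complex algebra_simps)
qed

section \<open>Linear isometries and orthonormal frames\<close>

lemma lin_isometry_linear: "lin_isometry f \<Longrightarrow> linear f"
  and lin_isometry_norm: "lin_isometry f \<Longrightarrow> norm (f x) = norm x"
  by (simp_all add: lin_isometry_def)

lemma lin_isometry_compose: "lin_isometry f \<Longrightarrow> lin_isometry g \<Longrightarrow> lin_isometry (g \<circ> f)"
  by (simp add: lin_isometry_def linear_compose)

lemma lin_isometry_inj:
  assumes "lin_isometry f" shows "inj f"
proof (rule injI)
  fix a b assume "f a = f b"
  then have "f (a - b) = 0"
    using linear_diff[OF lin_isometry_linear[OF assms]] by simp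
  then show "a = b"
    using lin_isometry_norm[OF assms, of "a - b"] by simp
qed

lemma lin_isometry_surj:
  fixes f :: "'a::euclidean_space \<Rightarrow> 'a"
  assumes "lin_isometry f" shows "surj f"
  using assms linear_injective_imp_surjective lin_isometry_inj lin_isometry_linear by blast

definition orthonormal_family :: "nat \<Rightarrow> (nat \<Rightarrow> 'a::real_inner) \<Rightarrow> bool" where
  "orthonormal_family n b \<longleftrightarrow> (\<forall>i<n. \<forall>j<n. inner (b i) (b j) = (if i = j then 1 else 0))"

lemma orthonormal_family_nth_iff:
  fixes xs :: "'a::real_inner list"
  assumes "n = length xs"
  shows "orthonormal_family n ((!) xs) \<longleftrightarrow>
    (\<forall>x\<in>set xs. inner x x = 1) \<and> sorted_wrt (\<lambda>x y. inner x y = 0) xs"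
proof -
  have "inner (xs ! i) (xs ! j) = (if i = j then 1 else 0)"
    if "\<forall>x\<in>set xs. inner x x = 1" "sorted_wrt (\<lambda>x y. inner x y = 0) xs" "i < n" "j < n" for i j
    using that assms by (cases i j rule: linorder_cases)
      (auto simp: sorted_wrt_iff_nth_less; metis inner_commute)+
  then show ?thesis
    using assms unfolding orthonormal_family_def
    by (auto simp: sorted_wrt_iff_nth_less in_set_conv_nth)
qed

lemma orthonormal_family_span:
  fixes b :: "nat \<Rightarrow> 'a::euclidean_space"
  assumes "orthonormal_family DIM('a) b"
  shows "span (b ` {..<DIM('a)}) = UNIV"
proof -
  have unit: "inner (b i) (b i) = 1" and orth: "i \<noteq> j \<Longrightarrow> inner (b i) (b j) = 0"
    if "i < DIM('a)" "j < DIM('a)" for i j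
    using assms that by (auto simp: orthonormal_family_def)
  have "inj_on b {..<DIM('a)}"
    by (rule inj_onI) (metis lessThan_iff orth unit zero_neq_one)
  moreover have "independent (b ` {..<DIM('a)})"
  proof (rule pairwise_orthogonal_independent)
    show "pairwise orthogonal (b ` {..<DIM('a)})"
      by (auto simp: pairwise_def orthogonal_def intro: orth)
    show "0 \<notin> b ` {..<DIM('a)}"
      using unit by force
  qed
  ultimately show ?thesis
    by (simp add: dim_eq_full[symmetric] dim_eq_card_independent card_image)
qed

lemma linear_eq_on_orthonormal_family:
  fixes b :: "nat \<Rightarrow> 'a::euclidean_space"
  assumes "linear f" "linear g" "orthonormal_family DIM('a) b"
    and "\<And>i. i < DIM('a) \<Longrightarrow> f (b i) = g (b i)"
  shows "f z = g z"
  using linear_eq_on_span[OF assms(1,2), of "b ` {..<DIM('a)}" z] assms(4)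
    orthonormal_family_span[OF assms(3)] by auto

lemma inner_orthonormal_combination:
  assumes "orthonormal_family n q" "j < n"
  shows "inner (\<Sum>i<n. c i *\<^sub>R q i) (q j) = c j"
proof -
  have "inner (\<Sum>i<n. c i *\<^sub>R q i) (q j) = (\<Sum>i<n. if i = j then c i else 0)"
    using assms by (intro trans[OF inner_sum_left] sum.cong) (auto simp: orthonormal_family_def)
  then show ?thesis using assms(2) by simp
qed

lemma inner_orthonormal_combinations:
  assumes "orthonormal_family n q"
  shows "inner (\<Sum>i<n. c i *\<^sub>R q i) (\<Sum>j<n. d j *\<^sub>R q j) = (\<Sum>i<n. c i * d i)"
  using inner_orthonormal_combination[OF assms]
  by (simp add: inner_sum_right mult.commute)

lemma orthonormal_family_expansion:
  fixes b :: "nat \<Rightarrow> 'a::euclidean_space"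
  assumes "orthonormal_family DIM('a) b"
  shows "z = (\<Sum>i<DIM('a). inner z (b i) *\<^sub>R b i)"
proof -
  define s where "s = (\<Sum>i<DIM('a). inner z (b i) *\<^sub>R b i)"
  have "inner z y = inner s y" for y
  proof (rule linear_eq_on_orthonormal_family[OF _ _ assms])
    show "linear (inner z)" "linear (inner s)"
      by (simp_all add: bounded_linear.linear bounded_linear_inner_right)
    show "inner z (b j) = inner s (b j)" if "j < DIM('a)" for j
      using inner_orthonormal_combination[OF assms that, of "\<lambda>i. inner z (b i)"] by (simp add: s_def)
  qed
  then show ?thesis
    by (metis s_def vector_eq_rdot)
qed

lemma lin_isometry_of_orthonormal_families:
  fixes b :: "nat \<Rightarrow> 'z::euclidean_space" and q :: "nat \<Rightarrow> 'a::real_inner"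
  assumes b: "orthonormal_family DIM('z) b" and q: "orthonormal_family DIM('z) q"
  obtains P where "lin_isometry P" "\<And>i. i < DIM('z) \<Longrightarrow> P (b i) = q i"
proof
  define P where "P z = (\<Sum>i<DIM('z). inner z (b i) *\<^sub>R q i)" for z
  have "linear P"
    by (rule linearI) (simp_all add: P_def inner_add_left scaleR_add_left sum.distrib scaleR_sum_right)
  moreover have "norm (P z) = norm z" for z
  proof -
    have "inner (P z) (P z) = (\<Sum>i<DIM('z). inner z (b i) * inner z (b i))"
      unfolding P_def by (rule inner_orthonormal_combinations[OF q])
    also have "\<dots> = inner (\<Sum>i<DIM('z). inner z (b i) *\<^sub>R b i) (\<Sum>i<DIM('z). inner z (b i) *\<^sub>R b i)"
      by (rule inner_orthonormal_combinations[OF b, symmetric])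
    also have "\<dots> = inner z z"
      by (simp flip: orthonormal_family_expansion[OF b])
    finally show ?thesis by (simp add: norm_eq_sqrt_inner)
  qed
  ultimately show "lin_isometry P"
    by (simp add: lin_isometry_def)
  show "P (b j) = q j" if "j < DIM('z)" for j
  proof -
    have "P (b j) = (\<Sum>i<DIM('z). if i = j then q i else 0)"
      using b that unfolding P_def orthonormal_family_def by (intro sum.cong) auto
    then show ?thesis using that by simp
  qed
qed

lemma unit_orthogonal_exists:
  fixes T :: "'a::euclidean_space set"
  assumes "subspace T" "set xs \<subseteq> T" "length xs < dim T"
  obtains x where "x \<in> T" "norm x = 1" "list_all (\<lambda>y. inner x y = 0) xs"
proof -
  have "dim (set xs) < dim T"
    using dim_le_card'[of "set xs"] card_length[of xs] assms(3) by simp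
  then have "span (set xs) \<subset> span T"
    using span_mono[OF assms(2)] dim_span by (metis less_irrefl psubsetI)
  then obtain x where x: "x \<noteq> 0" "x \<in> span T" "\<And>y. y \<in> span (set xs) \<Longrightarrow> orthogonal x y"
    using orthogonal_to_subspace_exists_gen by blast
  show ?thesis
  proof
    show "x /\<^sub>R norm x \<in> T"
      using x(2) assms(1) by (metis span_eq_iff subspace_scale)
    show "norm (x /\<^sub>R norm x) = 1"
      using x(1) by simp
    show "list_all (\<lambda>y. inner (x /\<^sub>R norm x) y = 0) xs"
      using x(3) span_superset by (auto simp: list_all_iff orthogonal_def)
  qed
qed

lemma isometric_bilinear_inner_right:
  assumes "isometric_bilinear \<mu>"
  shows "inner (\<mu> x y) (\<mu> x y') = (norm x)\<^sup>2 * inner y y'"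
proof -
  have b: "bilinear \<mu>" and n: "\<And>x y. norm (\<mu> x y) = norm x * norm y"
    using assms by (auto simp: isometric_bilinear_def)
  have sq: "inner (\<mu> x u) (\<mu> x u) = (norm x)\<^sup>2 * inner u u" for u
    using n[of x u] by (metis power2_norm_eq_inner power_mult_distrib)
  have "inner (\<mu> x y + \<mu> x y') (\<mu> x y + \<mu> x y') = (norm x)\<^sup>2 * inner (y + y') (y + y')"
    using sq[of "y + y'"] by (simp add: bilinear_radd[OF b])
  then show ?thesis
    using sq[of y] sq[of y'] by (simp add: inner_add_left inner_add_right inner_commute algebra_simps)
qed

lemma isometric_bilinear_polarization:
  assumes "isometric_bilinear \<mu>"
  shows "inner (\<mu> x y) (\<mu> x' y') + inner (\<mu> x' y) (\<mu> x y') = 2 * inner x x' * inner y y'"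
proof -
  have b: "bilinear \<mu>"
    using assms by (simp add: isometric_bilinear_def)
  have "inner (\<mu> x y + \<mu> x' y) (\<mu> x y' + \<mu> x' y') = inner (x + x') (x + x') * inner y y'"
    using isometric_bilinear_inner_right[OF assms, of "x + x'" y y']
    by (simp add: bilinear_ladd[OF b] power2_norm_eq_inner)
  then show ?thesis
    using isometric_bilinear_inner_right[OF assms, of x y y'] isometric_bilinear_inner_right[OF assms, of x' y y']
    by (simp add: inner_add_left inner_add_right inner_commute algebra_simps power2_norm_eq_inner)
qed

section \<open>Complex and quaternionic frames\<close>

lemma complex_structure_inner:
  fixes J :: "'a::real_inner \<Rightarrow> 'a"
  assumes "\<And>a. J (J a) = - a" "\<And>a b. inner (J a) b = - inner a (J b)"
  shows "inner (J a) (J b) = inner a b" "inner a (J a) = 0"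
  using assms(2)[of a "J b"] assms(1) assms(2)[of a a] by (simp_all add: inner_commute)

lemma orthonormal_complex_line_frame:
  fixes J :: "'a::real_inner \<Rightarrow> 'a"
  assumes J: "\<And>a. J (J a) = - a" "\<And>a b. inner (J a) b = - inner a (J b)" and z0: "norm z0 = 1"
  shows "orthonormal_family 2 ((!) [z0, J z0])"
  using z0 complex_structure_inner[OF J] by (simp add: orthonormal_family_nth_iff norm_eq_1)

lemma orthonormal_complex_plane_frame:
  fixes J :: "'a::real_inner \<Rightarrow> 'a"
  assumes J: "\<And>a. J (J a) = - a" "\<And>a b. inner (J a) b = - inner a (J b)"
    and z0: "norm z0 = 1" and g: "norm g = 1" "inner g z0 = 0" "inner g (J z0) = 0"
  shows "orthonormal_family 4 ((!) [z0, J z0, g, J g])"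
proof -
  have "inner z0 (J g) = 0" "inner (J z0) (J g) = 0"
    using J(2)[of z0 g] g(3) complex_structure_inner(1)[OF J, of z0 g] g(2) by (simp_all add: inner_commute)
  then show ?thesis
    using z0 g complex_structure_inner[OF J]
    by (simp add: orthonormal_family_nth_iff norm_eq_1 inner_commute)
qed

lemma orthonormal_quat_frame:
  assumes "inner w qone = 0" "norm w = 1" "inner v qone = 0" "norm v = 1" "inner w v = 0"
  shows "orthonormal_family 4 ((!) [qone, w, v, qmult w v])"
proof -
  have "norm (qmult w v) = 1" "norm qone = 1"
    using assms by (simp_all add: norm_qmult qone_def)
  then show ?thesis
    using assms qmult_imaginary_orthogonal[OF assms(1,3,5)]
    by (simp add: orthonormal_family_nth_iff norm_eq_1 inner_commute)
qed

lemma quat_chart_of_complex_structure: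
  fixes J :: "'z::euclidean_space \<Rightarrow> 'z"
  assumes dim: "DIM('z) = 4" and J: "linear J" "\<And>a. J (J a) = - a" "\<And>a b. inner (J a) b = - inner a (J b)"
    and z0: "norm z0 = 1" and g: "norm g = 1" "inner g z0 = 0" "inner g (J z0) = 0"
    and wv: "inner w qone = 0" "norm w = 1" "inner v qone = 0" "norm v = 1" "inner w v = 0"
  obtains P where "lin_isometry P" "P z0 = qone" "P g = v" "\<And>z. P (J z) = qmult w (P z)"
proof -
  note frame = orthonormal_complex_plane_frame[OF J(2,3) z0 g, folded dim]
  obtain P where P: "lin_isometry P" "\<And>i. i < 4 \<Longrightarrow> P ([z0, J z0, g, J g] ! i) = [qone, w, v, qmult w v] ! i"
    using lin_isometry_of_orthonormal_families[OF frame orthonormal_quat_frame[OF wv, folded dim]]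
    dim by metis
  have P_frame: "P z0 = qone" "P (J z0) = w" "P g = v" "P (J g) = qmult w v"
    using P(2)[of 0] P(2)[of 1] P(2)[of 2] P(2)[of 3] by simp_all
  have "P (J z) = qmult w (P z)" for z
  proof (rule linear_eq_on_orthonormal_family[OF _ _ frame])
    show "linear (\<lambda>z. P (J z))" "linear (\<lambda>z. qmult w (P z))"
      using linear_compose[OF J(1) lin_isometry_linear[OF P(1)]]
        linear_compose[OF lin_isometry_linear[OF P(1)] linear_qmult_right]
      by (simp_all add: o_def)
    show "P (J ([z0, J z0, g, J g] ! i)) = qmult w (P ([z0, J z0, g, J g] ! i))" if "i < DIM('z)" for i
      using that dim P_frame J(2) linear_neg[OF lin_isometry_linear[OF P(1)]]
        qmult_imaginary_self[OF wv(1)] wv(2)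
      by (auto simp: less_Suc_eq numeral_eq_Suc norm_eq_1 qmult_qone_left qmult_qone_right qmult_minus_left
          simp flip: qmult_assoc)
  qed
  then show ?thesis
    using that P(1) P_frame by blast
qed

section \<open>Normalised maps and their Clifford relations\<close>

text \<open>\<open>P\<close> plays the role of \<open>\<phi>\<^sub>Z\<close> for the normalised map \<open>\<nu>\<close>; then \<open>\<phi>\<^sub>X x = P (\<nu> x z0)\<close>.\<close>

definition normalizing_isometry ::
  "('a::real_normed_vector \<Rightarrow> 'a \<Rightarrow> 'a) \<Rightarrow> 'a \<Rightarrow> 'a set \<Rightarrow> ('x \<Rightarrow> 'z \<Rightarrow> 'z) \<Rightarrow> 'z \<Rightarrow>
    ('z::real_normed_vector \<Rightarrow> 'a) \<Rightarrow> bool" where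
  "normalizing_isometry m e W \<nu> z0 P \<longleftrightarrow> lin_isometry P \<and> P z0 = e \<and>
     (\<forall>x. P (\<nu> x z0) \<in> W) \<and> (\<forall>x z. P (\<nu> x z) = m (P (\<nu> x z0)) (P z))"

locale unital_isometric_bilinear =
  fixes \<nu> :: "'x::euclidean_space \<Rightarrow> 'z::euclidean_space \<Rightarrow> 'z" and eX :: 'x
  assumes isometric: "isometric_bilinear \<nu>"
    and norm_eX: "norm eX = 1"
    and eX_left: "\<nu> eX z = z"
begin

lemma bilinear: "bilinear \<nu>"
  using isometric by (simp add: isometric_bilinear_def)

lemma linear_right: "linear (\<nu> x)" and linear_left: "linear (\<lambda>x. \<nu> x z)"
  using bilinear by (simp_all add: bilinear_def)

lemma inner_right: "inner (\<nu> x a) (\<nu> x b) = (norm x)\<^sup>2 * inner a b"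
  by (rule isometric_bilinear_inner_right[OF isometric])

lemma skew:
  assumes "inner x eX = 0" shows "inner (\<nu> x a) b = - inner a (\<nu> x b)"
  using isometric_bilinear_polarization[OF isometric, of x a eX b] assms by (simp add: eX_left)

lemma inner_self_orthogonal:
  assumes "inner x eX = 0" shows "inner (\<nu> x a) a = 0"
  using skew[OF assms, of a a] by (simp add: inner_commute)

lemma inner_orthogonal_left:
  assumes "inner x x' = 0" shows "inner (\<nu> x a) (\<nu> x' a) = 0"
  using isometric_bilinear_polarization[OF isometric, of x a x' a] assms by (simp add: inner_commute)

lemma square:
  assumes "norm x = 1" "inner x eX = 0" shows "\<nu> x (\<nu> x a) = - a"
proof -
  have "inner (\<nu> x (\<nu> x a)) y = inner (- a) y" for y
    using skew[OF assms(2), of "\<nu> x a" y] inner_right[of x a y] assms(1) by simp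
  then show ?thesis by (metis vector_eq_rdot)
qed

lemma anticommute:
  assumes "inner x eX = 0" "inner x' eX = 0" "inner x x' = 0"
  shows "\<nu> x (\<nu> x' a) = - \<nu> x' (\<nu> x a)"
proof -
  have "inner (\<nu> x (\<nu> x' a)) y = inner (- \<nu> x' (\<nu> x a)) y" for y
  proof -
    have "inner (\<nu> x (\<nu> x' a)) y = - inner (\<nu> x' a) (\<nu> x y)"
      by (rule skew[OF assms(1)])
    also have "\<dots> = inner (\<nu> x a) (\<nu> x' y)"
      using isometric_bilinear_polarization[OF isometric, of x' a x y] assms(3)
      by (simp add: inner_commute)
    also have "\<dots> = inner (- \<nu> x' (\<nu> x a)) y"
      using skew[OF assms(2), of "\<nu> x a" y] by simp
    finally show ?thesis .
  qed
  then show ?thesis by (metis vector_eq_rdot)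
qed


lemma normalizing_isometry_of_frame:
  fixes P :: "'z \<Rightarrow> 'a::real_normed_vector"
  assumes P: "lin_isometry P" "P z0 = e"
    and m: "bilinear m" "\<And>a. m e a = a" and W: "subspace W" "e \<in> W"
    and frame: "orthonormal_family DIM('x) xs" "xs 0 = eX"
    and on_frame: "\<And>i. 0 < i \<Longrightarrow> i < DIM('x) \<Longrightarrow> P (\<nu> (xs i) z0) \<in> W"
      "\<And>i z. 0 < i \<Longrightarrow> i < DIM('x) \<Longrightarrow> P (\<nu> (xs i) z) = m (P (\<nu> (xs i) z0)) (P z)"
  shows "normalizing_isometry m e W \<nu> z0 P"
proof -
  have lin_P: "linear P"
    using P(1) by (rule lin_isometry_linear)
  have lin_\<phi>: "linear (\<lambda>x. P (\<nu> x z))" for z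
    using linear_compose[OF linear_left lin_P] by (simp add: o_def)
  have on_frame': "P (\<nu> (xs i) z0) \<in> W \<and> P (\<nu> (xs i) z) = m (P (\<nu> (xs i) z0)) (P z)"
    if "i < DIM('x)" for i z
  proof (cases "i = 0")
    case True
    then show ?thesis using P(2) W(2) frame(2) m(2) by (simp add: eX_left)
  next
    case False
    then show ?thesis using on_frame that by blast
  qed
  have "span (xs ` {..<DIM('x)}) \<subseteq> (\<lambda>x. P (\<nu> x z0)) -` W"
    using on_frame' by (intro span_minimal linear_subspace_vimage[OF lin_\<phi> W(1)]) blast
  then have "P (\<nu> x z0) \<in> W" for x
    using orthonormal_family_span[OF frame(1)] by blast
  moreover have "P (\<nu> x z) = m (P (\<nu> x z0)) (P z)" for x z
  proof (rule linear_eq_on_orthonormal_family[OF lin_\<phi> _ frame(1)])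
    show "linear (\<lambda>x. m (P (\<nu> x z0)) (P z))"
      using linear_compose[OF lin_\<phi>[of z0], of "\<lambda>a. m a (P z)"] m(1) by (simp add: bilinear_def o_def)
  qed (use on_frame' in blast)
  ultimately show ?thesis
    using P unfolding normalizing_isometry_def by blast
qed

lemma normalizing_isometry_dim1:
  fixes P :: "'z \<Rightarrow> 'a::real_normed_vector"
  assumes "DIM('x) = 1" "lin_isometry P" "P z0 = e"
    and "bilinear m" "\<And>a. m e a = a" "subspace W" "e \<in> W"
  shows "normalizing_isometry m e W \<nu> z0 P"
proof (rule normalizing_isometry_of_frame[OF assms(2-7)])
  show "orthonormal_family DIM('x) ((!) [eX])"
    using norm_eX by (simp add: assms(1) orthonormal_family_nth_iff norm_eq_1)
qed (use assms(1) in auto)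


lemma norm_image: "norm (\<nu> x z) = norm x * norm z"
  using isometric by (simp add: isometric_bilinear_def)

lemma complex_normalizing_isometry:
  assumes dim: "DIM('x) = 2" "DIM('z) = 2" and z0: "norm z0 = 1"
  shows "\<exists>P. normalizing_isometry (*) 1 (UNIV :: complex set) \<nu> z0 P"
proof -
  obtain x1 where x1: "norm x1 = 1" "inner x1 eX = 0"
    using unit_orthogonal_exists[OF subspace_UNIV, of "[eX]"] dim(1) by (auto simp: dim_UNIV)
  note J = square[OF x1] skew[OF x1(2)]
  note frame = orthonormal_complex_line_frame[OF J z0, folded dim(2)]
  have "orthonormal_family DIM('z) ((!) [1, \<i>])"
    by (simp add: dim(2) orthonormal_family_nth_iff inner_complex_def)
  then obtain P where P: "lin_isometry P" "\<And>i. i < 2 \<Longrightarrow> P ([z0, \<nu> x1 z0] ! i) = [1, \<i>] ! i"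
    using lin_isometry_of_orthonormal_families[OF frame] dim(2) by metis
  then have P_frame: "P z0 = 1" "P (\<nu> x1 z0) = \<i>"
    using P(2)[of 0] P(2)[of 1] by simp_all
  have J_eq: "P (\<nu> x1 z) = \<i> * P z" for z
  proof (rule linear_eq_on_orthonormal_family[OF _ _ frame])
    show "linear (\<lambda>z. P (\<nu> x1 z))" "linear (\<lambda>z. \<i> * P z)"
      using linear_compose[OF linear_right lin_isometry_linear[OF P(1)]]
        linear_compose[OF lin_isometry_linear[OF P(1)] linear_times[of \<i>]]
      by (simp_all add: o_def)
    show "P (\<nu> x1 ([z0, \<nu> x1 z0] ! i)) = \<i> * P ([z0, \<nu> x1 z0] ! i)" if "i < DIM('z)" for i
      using that dim(2) P_frame J(1) linear_neg[OF lin_isometry_linear[OF P(1)]]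
      by (auto simp: less_Suc_eq numeral_eq_Suc)
  qed
  have "orthonormal_family DIM('x) ((!) [eX, x1])"
    using norm_eX x1 by (simp add: dim(1) orthonormal_family_nth_iff norm_eq_1 inner_commute)
  then have "normalizing_isometry (*) 1 UNIV \<nu> z0 P"
    by (rule normalizing_isometry_of_frame[OF P(1) P_frame(1) bilinear_times mult_1_left subspace_UNIV UNIV_I])
      (use J_eq P_frame(2) dim(1) in \<open>auto simp: less_Suc_eq numeral_eq_Suc\<close>)
  then show ?thesis
    by (rule exI[of _ P])
qed

lemma unit_image_orthogonal:
  assumes "norm x2 = 1" "inner x2 eX = 0" "inner x2 x1 = 0" "norm z0 = 1"
  shows "norm (\<nu> x2 z0) = 1" "inner (\<nu> x2 z0) z0 = 0" "inner (\<nu> x2 z0) (\<nu> x1 z0) = 0"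
  using norm_image[of x2 z0] assms inner_self_orthogonal[OF assms(2)] inner_orthogonal_left[OF assms(3)]
  by simp_all

lemma quat_chart_of_two_structures:
  assumes dim: "DIM('z) = 4" and z0: "norm z0 = 1"
    and x: "norm x1 = 1" "inner x1 eX = 0" "norm x2 = 1" "inner x2 eX = 0" "inner x2 x1 = 0"
    and w: "inner w1 qone = 0" "norm w1 = 1" "inner w2 qone = 0" "norm w2 = 1" "inner w1 w2 = 0"
  obtains P where "lin_isometry P" "P z0 = qone"
    "\<And>z. P (\<nu> x1 z) = qmult w1 (P z)" "\<And>z. P (\<nu> x2 z) = qmult w2 (P z)"
proof -
  note J1 = square[OF x(1,2)] skew[OF x(2)]
  note g = unit_image_orthogonal[OF x(3-5) z0]
  obtain P where P: "lin_isometry P" "P z0 = qone" "P (\<nu> x2 z0) = w2" "\<And>z. P (\<nu> x1 z) = qmult w1 (P z)"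
    using quat_chart_of_complex_structure[OF dim linear_right J1 z0 g w] by blast
  have P_neg: "P (- z) = - P z" for z
    by (rule linear_neg[OF lin_isometry_linear[OF P(1)]])
  have "P (\<nu> x2 z) = qmult w2 (P z)" for z
  proof (rule linear_eq_on_orthonormal_family[OF _ _ orthonormal_complex_plane_frame[OF J1 z0 g, folded dim]])
    show "linear (\<lambda>z. P (\<nu> x2 z))" "linear (\<lambda>z. qmult w2 (P z))"
      using linear_compose[OF linear_right lin_isometry_linear[OF P(1)]]
        linear_compose[OF lin_isometry_linear[OF P(1)] linear_qmult_right]
      by (simp_all add: o_def)
    have w_rel: "qmult w1 w1 = - qone" "qmult w2 w2 = - qone" "qmult w2 w1 = - qmult w1 w2"
      using w qmult_imaginary_self qmult_imaginary_anticommute[OF w(1,3,5)] by (simp_all add: norm_eq_1)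
    have "qmult w2 (qmult w1 w2) = - qmult w1 (qmult w2 w2)"
      by (simp only: qmult_assoc[symmetric] w_rel(3) qmult_minus_left)
    also have "\<dots> = w1"
      by (simp add: w_rel(2) qmult_minus_right qmult_qone_right)
    finally have "qmult w2 (qmult w1 w2) = w1" .
    then show "P (\<nu> x2 ([z0, \<nu> x1 z0, \<nu> x2 z0, \<nu> x1 (\<nu> x2 z0)] ! i)) =
        qmult w2 (P ([z0, \<nu> x1 z0, \<nu> x2 z0, \<nu> x1 (\<nu> x2 z0)] ! i))" if "i < DIM('z)" for i
      using that dim P(2-4) P_neg w_rel square[OF x(3,4)] anticommute[OF x(4,2) x(5)] J1(1)
      by (auto simp: less_Suc_eq numeral_eq_Suc qmult_qone_right qmult_minus_right
          simp flip: qmult_assoc)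
  qed
  then show ?thesis
    using that P(1,2,4) by blast
qed

lemma third_structure_eq_composition:
  assumes dim: "DIM('z) = 4" and z0: "norm z0 = 1"
    and x: "norm x1 = 1" "inner x1 eX = 0" "norm x2 = 1" "inner x2 eX = 0" "inner x2 x1 = 0"
      "inner x3 eX = 0" "inner x3 x1 = 0" "inner x3 x2 = 0"
  shows "\<nu> x3 z = inner (\<nu> x3 z0) (\<nu> x1 (\<nu> x2 z0)) *\<^sub>R \<nu> x1 (\<nu> x2 z)"
proof -
  define s where "s = inner (\<nu> x3 z0) (\<nu> x1 (\<nu> x2 z0))"
  define F where "F = (!) [z0, \<nu> x1 z0, \<nu> x2 z0, \<nu> x1 (\<nu> x2 z0)]"
  have frame: "orthonormal_family DIM('z) F"
    unfolding F_def dim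
    by (rule orthonormal_complex_plane_frame[OF square[OF x(1,2)] skew[OF x(2)] z0 unit_image_orthogonal[OF x(3-5) z0]])
  have "\<nu> x3 z0 = (\<Sum>i<4. inner (\<nu> x3 z0) (F i) *\<^sub>R F i)"
    using orthonormal_family_expansion[OF frame] by (simp add: dim)
  also have "\<dots> = s *\<^sub>R \<nu> x1 (\<nu> x2 z0)"
    using inner_self_orthogonal[OF x(6)] inner_orthogonal_left[OF x(7)] inner_orthogonal_left[OF x(8)]
    by (simp add: F_def s_def numeral_eq_Suc lessThan_Suc)
  finally have J3: "\<nu> x3 z0 = s *\<^sub>R \<nu> x1 (\<nu> x2 z0)" .
  show ?thesis
    unfolding s_def[symmetric]
  proof (rule linear_eq_on_orthonormal_family[OF linear_right _ frame])
    show "linear (\<lambda>z. s *\<^sub>R \<nu> x1 (\<nu> x2 z))"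
      using linear_compose[OF linear_right linear_right] by (simp add: o_def linear_compose_scale_right)
    show "\<nu> x3 (F i) = s *\<^sub>R \<nu> x1 (\<nu> x2 (F i))" if "i < DIM('z)" for i
      using that dim J3 square[OF x(1,2)] square[OF x(3,4)] anticommute[OF x(4,2,5)]
        anticommute[OF x(6,2,7)] anticommute[OF x(6,4,8)]
      by (auto simp: F_def less_Suc_eq numeral_eq_Suc bilinear_rneg[OF bilinear] bilinear_rmul[OF bilinear])
  qed
qed

lemma quat_normalizing_isometry_dim2:
  assumes dim: "DIM('x) = 2" "DIM('z) = 4" and z0: "norm z0 = 1"
    and W: "subspace W" "dim W = 2" "qone \<in> W"
  shows "\<exists>P. normalizing_isometry qmult qone W \<nu> z0 P"
proof -
  obtain x1 where x1: "norm x1 = 1" "inner x1 eX = 0"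
    using unit_orthogonal_exists[OF subspace_UNIV, of "[eX]"] dim(1) by (auto simp: dim_UNIV)
  obtain w1 where w1: "w1 \<in> W" "norm w1 = 1" "inner w1 qone = 0"
    using unit_orthogonal_exists[OF W(1), of "[qone]"] W by auto
  obtain w2 :: quat where w2: "norm w2 = 1" "inner w2 qone = 0" "inner w2 w1 = 0"
    using unit_orthogonal_exists[OF subspace_UNIV, of "[qone, w1]"] by (simp add: dim_UNIV) blast
  obtain g where g: "norm g = 1" "inner g z0 = 0" "inner g (\<nu> x1 z0) = 0"
    using unit_orthogonal_exists[OF subspace_UNIV, of "[z0, \<nu> x1 z0]"] dim(2) by (auto simp: dim_UNIV)
  obtain P where P: "lin_isometry P" "P z0 = qone" "\<And>z. P (\<nu> x1 z) = qmult w1 (P z)"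
    using quat_chart_of_complex_structure[OF dim(2) linear_right square[OF x1] skew[OF x1(2)] z0 g
        w1(3,2) w2(2,1)] w2(3) by (metis inner_commute)
  have "orthonormal_family DIM('x) ((!) [eX, x1])"
    using norm_eX x1 by (simp add: dim(1) orthonormal_family_nth_iff norm_eq_1 inner_commute)
  then have "normalizing_isometry qmult qone W \<nu> z0 P"
    by (rule normalizing_isometry_of_frame[OF P(1,2) qmult_bilinear qmult_qone_left W(1,3)])
      (use P(2,3) w1(1) dim(1) in \<open>auto simp: less_Suc_eq numeral_eq_Suc qmult_qone_right\<close>)
  then show ?thesis
    by (rule exI[of _ P])
qed

lemma quat_charts_of_two_structures_exist:
  assumes dim: "3 \<le> DIM('x)" "DIM('z) = 4" and z0: "norm z0 = 1"
    and W: "subspace W" "dim W = DIM('x)" "qone \<in> W"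
  obtains x1 x2 w1 w2 P where "norm x1 = 1" "inner x1 eX = 0" "norm x2 = 1" "inner x2 eX = 0"
    "inner x2 x1 = 0" "w1 \<in> W" "w2 \<in> W" "lin_isometry P" "P z0 = qone"
    "\<And>z. P (\<nu> x1 z) = qmult w1 (P z)" "\<And>z. P (\<nu> x2 z) = qmult w2 (P z)"
proof -
  obtain x1 where x1: "norm x1 = 1" "inner x1 eX = 0"
    using unit_orthogonal_exists[OF subspace_UNIV, of "[eX]"] dim(1) by (auto simp: dim_UNIV)
  obtain x2 where x2: "norm x2 = 1" "inner x2 eX = 0" "inner x2 x1 = 0"
    using unit_orthogonal_exists[OF subspace_UNIV, of "[eX, x1]"] dim(1) by (auto simp: dim_UNIV)
  obtain w1 where w1: "w1 \<in> W" "norm w1 = 1" "inner w1 qone = 0"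
    using unit_orthogonal_exists[OF W(1), of "[qone]"] W dim(1) by auto
  obtain w2 where w2: "w2 \<in> W" "norm w2 = 1" "inner w2 qone = 0" "inner w2 w1 = 0"
    using unit_orthogonal_exists[OF W(1), of "[qone, w1]"] W dim(1) w1(1) by simp blast
  have "inner w1 w2 = 0"
    using w2(4) by (simp add: inner_commute)
  then obtain P where "lin_isometry P" "P z0 = qone"
    "\<And>z. P (\<nu> x1 z) = qmult w1 (P z)" "\<And>z. P (\<nu> x2 z) = qmult w2 (P z)"
    using quat_chart_of_two_structures[OF dim(2) z0 x1 x2 w1(3,2) w2(3,2)] by blast
  with x1 x2 w1(1) w2(1) show ?thesis
    by (rule that)
qed

lemma quat_normalizing_isometry_dim3:
  assumes dim: "DIM('x) = 3" "DIM('z) = 4" and z0: "norm z0 = 1"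
    and W: "subspace W" "dim W = 3" "qone \<in> W"
  shows "\<exists>P. normalizing_isometry qmult qone W \<nu> z0 P"
proof -
  have dim': "3 \<le> DIM('x)" "dim W = DIM('x)"
    using dim(1) W(2) by simp_all
  obtain x1 x2 w1 w2 P where x: "norm x1 = 1" "inner x1 eX = 0" "norm x2 = 1" "inner x2 eX = 0"
      "inner x2 x1 = 0" and w: "w1 \<in> W" "w2 \<in> W" and P: "lin_isometry P" "P z0 = qone"
      "\<And>z. P (\<nu> x1 z) = qmult w1 (P z)" "\<And>z. P (\<nu> x2 z) = qmult w2 (P z)"
    by (rule quat_charts_of_two_structures_exist[OF dim'(1) dim(2) z0 W(1) dim'(2) W(3)]) blast
  have "orthonormal_family DIM('x) ((!) [eX, x1, x2])"
    using norm_eX x by (simp add: dim(1) orthonormal_family_nth_iff norm_eq_1 inner_commute)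
  then have "normalizing_isometry qmult qone W \<nu> z0 P"
    by (rule normalizing_isometry_of_frame[OF P(1,2) qmult_bilinear qmult_qone_left W(1,3)])
      (use P w dim(1) in \<open>auto simp: less_Suc_eq numeral_eq_Suc qmult_qone_right\<close>)
  then show ?thesis
    by (rule exI[of _ P])
qed

lemma quat_normalizing_isometry_dim4:
  assumes dim: "DIM('x) = 4" "DIM('z) = 4" and z0: "norm z0 = 1"
  shows "\<exists>P. normalizing_isometry qmult qone UNIV \<nu> z0 P"
proof -
  have dim': "3 \<le> DIM('x)" "dim (UNIV :: quat set) = DIM('x)"
    using dim(1) by (simp_all add: dim_UNIV)
  obtain x1 x2 w1 w2 P where x: "norm x1 = 1" "inner x1 eX = 0" "norm x2 = 1" "inner x2 eX = 0"
      "inner x2 x1 = 0" and "w1 \<in> UNIV" "w2 \<in> UNIV" and P: "lin_isometry P" "P z0 = qone"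
      "\<And>z. P (\<nu> x1 z) = qmult w1 (P z)" "\<And>z. P (\<nu> x2 z) = qmult w2 (P z)"
    by (rule quat_charts_of_two_structures_exist[OF dim'(1) dim(2) z0 subspace_UNIV dim'(2) UNIV_I]) blast
  obtain x3 where x3: "norm x3 = 1" "inner x3 eX = 0" "inner x3 x1 = 0" "inner x3 x2 = 0"
    using unit_orthogonal_exists[OF subspace_UNIV, of "[eX, x1, x2]"] dim(1) by (auto simp: dim_UNIV)
  define s where "s = inner (\<nu> x3 z0) (\<nu> x1 (\<nu> x2 z0))"
  have P_x3: "P (\<nu> x3 z) = qmult (s *\<^sub>R qmult (P (\<nu> x1 z0)) (P (\<nu> x2 z0))) (P z)" for z
    using third_structure_eq_composition[OF dim(2) z0 x x3(2-4), of z] P(2-4)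
      linear_cmul[OF lin_isometry_linear[OF P(1)]]
    by (simp add: s_def qmult_assoc qmult_scaleR_left qmult_qone_right)
  have "orthonormal_family DIM('x) ((!) [eX, x1, x2, x3])"
    using norm_eX x x3 by (simp add: dim(1) orthonormal_family_nth_iff norm_eq_1 inner_commute)
  then have "normalizing_isometry qmult qone UNIV \<nu> z0 P"
    by (rule normalizing_isometry_of_frame[OF P(1,2) qmult_bilinear qmult_qone_left subspace_UNIV UNIV_I])
      (use P P_x3 dim(1) in \<open>auto simp: less_Suc_eq numeral_eq_Suc qmult_qone_right\<close>)
  then show ?thesis
    by (rule exI[of _ P])
qed

end

section \<open>Reduction to unital maps\<close>

lemma lin_isometry_isometric_bilinear_left:
  "isometric_bilinear \<mu> \<Longrightarrow> norm y = 1 \<Longrightarrow> lin_isometry (\<lambda>x. \<mu> x y)"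
  and lin_isometry_isometric_bilinear_right:
  "isometric_bilinear \<mu> \<Longrightarrow> norm x = 1 \<Longrightarrow> lin_isometry (\<mu> x)"
  by (simp_all add: isometric_bilinear_def lin_isometry_def bilinear_def)

lemma unital_normalization_exists:
  fixes \<mu> :: "'x::euclidean_space \<Rightarrow> 'y::euclidean_space \<Rightarrow> 'z::euclidean_space"
  assumes \<mu>: "isometric_bilinear \<mu>" and dim: "DIM('y) = DIM('z)" and eX: "norm eX = 1"
  obtains L' :: "'z \<Rightarrow> 'y" where "\<And>y. L' (\<mu> eX y) = y"
    "unital_isometric_bilinear (\<lambda>x z. \<mu> x (L' z)) eX"
proof -
  have L: "lin_isometry (\<mu> eX)"
    by (rule lin_isometry_isometric_bilinear_right[OF \<mu> eX])
  obtain L' where L': "linear L'" "\<And>y. L' (\<mu> eX y) = y" "\<And>z. \<mu> eX (L' z) = z"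
    using linear_injective_isomorphism[OF lin_isometry_linear[OF L] lin_isometry_inj[OF L]] dim
    by (auto simp: dim_UNIV)
  have "norm (L' z) = norm z" for z
    using lin_isometry_norm[OF L, of "L' z"] L'(3) by simp
  moreover have "bilinear (\<lambda>x z. \<mu> x (L' z))"
    using \<mu> L'(1) by (simp add: isometric_bilinear_def bilinear_def linear_compose[unfolded o_def])
  ultimately have "isometric_bilinear (\<lambda>x z. \<mu> x (L' z))"
    using \<mu> by (simp add: isometric_bilinear_def)
  then show ?thesis
    by (intro that[of L']) (simp_all add: unital_isometric_bilinear_def L'(2,3) eX)
qed

lemma factorizes_through_normalized_if_normalizing_isometries:
  fixes \<mu> :: "'x::euclidean_space \<Rightarrow> 'y::euclidean_space \<Rightarrow> 'z::euclidean_space"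
    and m :: "'a::real_normed_vector \<Rightarrow> 'a \<Rightarrow> 'a"
  assumes \<mu>: "isometric_bilinear \<mu>" and dim: "DIM('y) = DIM('z)"
    and normalizing: "\<And>(\<nu> :: 'x \<Rightarrow> 'z \<Rightarrow> 'z) eX z0. unital_isometric_bilinear \<nu> eX \<Longrightarrow> norm z0 = 1 \<Longrightarrow>
      \<exists>P. normalizing_isometry m e W \<nu> z0 P"
  shows "factorizes_through_normalized m e \<mu> W"
  unfolding factorizes_through_normalized_def
proof (intro allI impI, elim conjE)
  fix eX :: 'x and eY :: 'y
  assume eX: "norm eX = 1" and eY: "norm eY = 1"
  obtain L' where L': "\<And>y. L' (\<mu> eX y) = y" and \<nu>: "unital_isometric_bilinear (\<lambda>x z. \<mu> x (L' z)) eX"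
    using unital_normalization_exists[OF \<mu> dim eX] by blast
  define z0 where "z0 = \<mu> eX eY"
  have "norm z0 = 1"
    using \<mu> eX eY by (simp add: z0_def isometric_bilinear_def)
  then obtain P where P: "normalizing_isometry m e W (\<lambda>x z. \<mu> x (L' z)) z0 P"
    using normalizing[OF \<nu>] by blast
  then have P': "lin_isometry P" "P z0 = e" "\<And>x. P (\<mu> x eY) \<in> W"
    "\<And>x y. P (\<mu> x y) = m (P (\<mu> x eY)) (P (\<mu> eX y))"
    using L' unfolding normalizing_isometry_def z0_def by metis+
  show "\<exists>\<phi>X \<phi>Y \<phi>Z. lin_isometry \<phi>X \<and> range \<phi>X \<subseteq> W \<and> lin_isometry \<phi>Y \<and> lin_isometry \<phi>Z \<and>
      (\<forall>x y. \<phi>Z (\<mu> x y) = m (\<phi>X x) (\<phi>Y y)) \<and> \<phi>X eX = e \<and> \<phi>Y eY = e"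
  proof (intro exI conjI allI)
    show "lin_isometry (P \<circ> (\<lambda>x. \<mu> x eY))" "lin_isometry (P \<circ> \<mu> eX)"
      using P'(1) lin_isometry_isometric_bilinear_left[OF \<mu> eY] lin_isometry_isometric_bilinear_right[OF \<mu> eX]
      by (simp_all add: lin_isometry_compose)
    show "range (P \<circ> (\<lambda>x. \<mu> x eY)) \<subseteq> W"
      using P'(3) by auto
    show "P (\<mu> x y) = m ((P \<circ> (\<lambda>x. \<mu> x eY)) x) ((P \<circ> \<mu> eX) y)" for x y
      unfolding o_def by (rule P'(4))
    show "(P \<circ> (\<lambda>x. \<mu> x eY)) eX = e" "(P \<circ> \<mu> eX) eY = e"
      using P'(2) by (simp_all add: z0_def)
  qed (rule P'(1))
qed

section \<open>Associative composition algebras\<close>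

locale associative_composition_algebra =
  fixes m :: "'a::euclidean_space \<Rightarrow> 'a \<Rightarrow> 'a" and e :: 'a
  assumes bilinear_m: "bilinear m"
    and norm_m: "norm (m a b) = norm a * norm b"
    and assoc_m: "m (m a b) c = m a (m b c)"
    and unit_left: "m e a = a"
    and unit_right: "m a e = a"

lemma associative_composition_algebra_times:
  "associative_composition_algebra (*) (1::'a::{real_normed_div_algebra, euclidean_space})"
  by unfold_locales (simp_all add: bilinear_times norm_mult mult.assoc)

lemma associative_composition_algebra_qmult: "associative_composition_algebra qmult qone"
  by unfold_locales (simp_all add: qmult_bilinear norm_qmult qmult_assoc qmult_qone_left qmult_qone_right)

context associative_composition_algebra
begin

lemma norm_unit: "norm e = 1"
proof -
  obtain b :: 'a where "b \<noteq> 0"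
    using nonzero_Basis SOME_Basis by blast
  then have "e \<noteq> 0"
    using unit_left[of b] bilinear_lzero[OF bilinear_m] by force
  moreover have "norm e = norm e * norm e"
    using norm_m[of e e] unit_left[of e] by simp
  ultimately show ?thesis by simp
qed

lemma lin_isometry_left_mult:
  assumes "norm a = 1" shows "lin_isometry (m a)"
  using bilinear_m assms by (simp add: lin_isometry_def bilinear_def norm_m)

lemma lin_isometry_right_mult:
  assumes "norm a = 1" shows "lin_isometry (\<lambda>b. m b a)"
  using bilinear_m assms by (simp add: lin_isometry_def bilinear_def norm_m)

lemma lin_isometry_to_unit_exists:
  fixes z0 :: "'z::euclidean_space"
  assumes "DIM('z) = DIM('a)" "norm z0 = 1"
  obtains P :: "'z \<Rightarrow> 'a" where "lin_isometry P" "P z0 = e"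
proof -
  obtain f :: "'z \<Rightarrow> 'a" where f: "lin_isometry f"
    using isomorphisms_UNIV_UNIV[OF assms(1)] by (metis lin_isometry_def)
  then have "norm (f z0) = 1"
    using assms(2) lin_isometry_norm by metis
  then obtain a where a: "m (f z0) a = e"
    using lin_isometry_surj[OF lin_isometry_left_mult] by (metis surj_def)
  then have "norm a = 1"
    using norm_m[of "f z0" a] \<open>norm (f z0) = 1\<close> norm_unit by simp
  then have "lin_isometry ((\<lambda>b. m b a) \<circ> f)"
    using f lin_isometry_compose lin_isometry_right_mult by blast
  with a that show ?thesis by auto
qed


lemma factorizes_through_if_normalized:
  fixes \<mu> :: "'x::euclidean_space \<Rightarrow> 'y::euclidean_space \<Rightarrow> 'z::euclidean_space"
  assumes W: "subspace W" "dim W = DIM('x)"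
    and normalized: "\<And>W'. subspace W' \<Longrightarrow> dim W' = DIM('x) \<Longrightarrow> e \<in> W' \<Longrightarrow>
      factorizes_through_normalized m e \<mu> W'"
  shows "factorizes_through m \<mu> W"
proof -
  obtain w where w: "w \<in> W" "norm w = 1"
    using unit_orthogonal_exists[OF W(1), of "[]"] W(2) by auto
  define W' where "W' = m w -` W"
  have L: "lin_isometry (m w)"
    by (rule lin_isometry_left_mult[OF w(2)])
  have "subspace W'"
    unfolding W'_def by (rule linear_subspace_vimage[OF lin_isometry_linear[OF L] W(1)])
  moreover have "dim W' = DIM('x)"
  proof -
    have "m w ` W' = W"
      unfolding W'_def using lin_isometry_surj[OF L] by (simp add: surj_image_vimage_eq)
    moreover have "dim (m w ` W') = dim W'"
      by (rule dim_image_eq[OF lin_isometry_linear[OF L] inj_on_subset[OF lin_isometry_inj[OF L] subset_UNIV]])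
    ultimately show ?thesis using W(2) by simp
  qed
  moreover have "e \<in> W'"
    using w(1) unit_right by (simp add: W'_def)
  ultimately have "factorizes_through_normalized m e \<mu> W'"
    by (rule normalized)
  moreover obtain eX :: 'x and eY :: 'y where "norm eX = 1" "norm eY = 1"
    using norm_Basis[OF SOME_Basis] norm_Basis[OF SOME_Basis] by blast
  ultimately obtain \<phi>X \<phi>Y \<phi>Z where \<phi>: "lin_isometry \<phi>X" "range \<phi>X \<subseteq> W'" "lin_isometry \<phi>Y"
      "lin_isometry \<phi>Z" "\<And>x y. \<phi>Z (\<mu> x y) = m (\<phi>X x) (\<phi>Y y)"
    unfolding factorizes_through_normalized_def by blast
  show ?thesis
    unfolding factorizes_through_def
  proof (intro exI conjI allI)
    show "lin_isometry (m w \<circ> \<phi>X)" "lin_isometry (m w \<circ> \<phi>Z)"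
      using \<phi>(1,4) L by (simp_all add: lin_isometry_compose)
    show "range (m w \<circ> \<phi>X) \<subseteq> W"
      using \<phi>(2) by (auto simp: W'_def)
    show "(m w \<circ> \<phi>Z) (\<mu> x y) = m ((m w \<circ> \<phi>X) x) (\<phi>Y y)" for x y
      by (simp add: \<phi>(5) assoc_m)
  qed (rule \<phi>(3))
qed

lemma factorization_from_normalizing_isometries:
  fixes \<mu> :: "'x::euclidean_space \<Rightarrow> 'y::euclidean_space \<Rightarrow> 'z::euclidean_space"
  assumes \<mu>: "isometric_bilinear \<mu>" and dim: "DIM('y) = DIM('z)" "DIM('z) = DIM('a)"
    and W: "subspace W" "dim W = DIM('x)"
    and normalizing: "\<And>(\<nu> :: 'x \<Rightarrow> 'z \<Rightarrow> 'z) eX z0 W'. 2 \<le> DIM('x) \<Longrightarrow>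
      unital_isometric_bilinear \<nu> eX \<Longrightarrow> norm z0 = 1 \<Longrightarrow> subspace W' \<Longrightarrow> dim W' = DIM('x) \<Longrightarrow>
      e \<in> W' \<Longrightarrow> \<exists>P. normalizing_isometry m e W' \<nu> z0 P"
  shows "factorizes_through m \<mu> W \<and> (e \<in> W \<longrightarrow> factorizes_through_normalized m e \<mu> W)"
proof -
  have normalized: "factorizes_through_normalized m e \<mu> W'"
    if W': "subspace W'" "dim W' = DIM('x)" "e \<in> W'" for W'
  proof (rule factorizes_through_normalized_if_normalizing_isometries[OF \<mu> dim(1)])
    fix \<nu> :: "'x \<Rightarrow> 'z \<Rightarrow> 'z" and eX :: 'x and z0 :: 'z
    assume \<nu>: "unital_isometric_bilinear \<nu> eX" and z0: "norm z0 = 1"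
    show "\<exists>P. normalizing_isometry m e W' \<nu> z0 P"
    proof (cases "DIM('x) = 1")
      case True
      obtain P :: "'z \<Rightarrow> 'a" where P: "lin_isometry P" "P z0 = e"
        using lin_isometry_to_unit_exists[OF dim(2) z0] by blast
      have "normalizing_isometry m e W' \<nu> z0 P"
        by (rule unital_isometric_bilinear.normalizing_isometry_dim1[OF \<nu> True P bilinear_m unit_left W'(1,3)])
      then show ?thesis
        by (rule exI[of _ P])
    next
      case False
      then have "2 \<le> DIM('x)"
        using DIM_positive[where 'a='x] by linarith
      then show ?thesis
        by (rule normalizing[OF _ \<nu> z0 W'])
    qed
  qed
  then show ?thesis
    using factorizes_through_if_normalized[OF W] normalized[OF W] by blast
qed

end

lemma real_factorization:
  fixes \<mu> :: "'x::euclidean_space \<Rightarrow> 'y::euclidean_space \<Rightarrow> 'z::euclidean_space"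
  assumes "isometric_bilinear \<mu>" "DIM('x) \<le> DIM('y)" "DIM('y) = DIM('z)" "DIM('y) = 1"
    and "subspace (W :: real set)" "dim W = DIM('x)"
  shows "factorizes_through (*) \<mu> W \<and> (1 \<in> W \<longrightarrow> factorizes_through_normalized (*) 1 \<mu> W)"
  using assms by (intro associative_composition_algebra.factorization_from_normalizing_isometries
      [OF associative_composition_algebra_times]) auto

lemma complex_factorization:
  fixes \<mu> :: "'x::euclidean_space \<Rightarrow> 'y::euclidean_space \<Rightarrow> 'z::euclidean_space"
  assumes "isometric_bilinear \<mu>" "DIM('x) \<le> DIM('y)" "DIM('y) = DIM('z)" "DIM('y) = 2"
    and "subspace (W :: complex set)" "dim W = DIM('x)"
  shows "factorizes_through (*) \<mu> W \<and> (1 \<in> W \<longrightarrow> factorizes_through_normalized (*) 1 \<mu> W)"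
proof (rule associative_composition_algebra.factorization_from_normalizing_isometries
    [OF associative_composition_algebra_times assms(1,3) _ assms(5,6)])
  fix \<nu> :: "'x \<Rightarrow> 'z \<Rightarrow> 'z" and eX :: 'x and z0 :: 'z and W' :: "complex set"
  assume "2 \<le> DIM('x)" "unital_isometric_bilinear \<nu> eX" "norm z0 = 1" "subspace W'" "dim W' = DIM('x)"
  moreover from this have "W' = UNIV"
    using assms(2,4) dim_eq_full[of W'] span_eq_iff[of W'] by simp
  ultimately show "\<exists>P. normalizing_isometry (*) 1 W' \<nu> z0 P"
    using unital_isometric_bilinear.complex_normalizing_isometry assms(2-4) by fastforce
qed (use assms in simp)

lemma quat_factorization:
  fixes \<mu> :: "'x::euclidean_space \<Rightarrow> 'y::euclidean_space \<Rightarrow> 'z::euclidean_space"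
  assumes "isometric_bilinear \<mu>" "DIM('y) = DIM('z)" "DIM('y) = 4"
    and "subspace (W :: quat set)" "dim W = DIM('x)"
  shows "factorizes_through qmult \<mu> W \<and> (qone \<in> W \<longrightarrow> factorizes_through_normalized qmult qone \<mu> W)"
proof (rule associative_composition_algebra.factorization_from_normalizing_isometries
    [OF associative_composition_algebra_qmult assms(1,2) _ assms(4,5)])
  fix \<nu> :: "'x \<Rightarrow> 'z \<Rightarrow> 'z" and eX :: 'x and z0 :: 'z and W' :: "quat set"
  assume dim: "2 \<le> DIM('x)" and \<nu>: "unital_isometric_bilinear \<nu> eX" and z0: "norm z0 = 1"
    and W': "subspace W'" "dim W' = DIM('x)" "qone \<in> W'"
  have dim_z: "DIM('z) = 4"
    using assms(2,3) by simp
  have "DIM('x) \<le> 4"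
    using W'(2) dim_subset_UNIV[of W'] by (simp add: dim_UNIV)
  with dim consider "DIM('x) = 2" | "DIM('x) = 3" | "DIM('x) = 4"
    by linarith
  then show "\<exists>P. normalizing_isometry qmult qone W' \<nu> z0 P"
  proof cases
    case 1
    with W' show ?thesis
      using unital_isometric_bilinear.quat_normalizing_isometry_dim2[OF \<nu> _ dim_z z0] by simp
  next
    case 2
    with W' show ?thesis
      using unital_isometric_bilinear.quat_normalizing_isometry_dim3[OF \<nu> _ dim_z z0] by simp
  next
    case 3
    with W' have "W' = UNIV"
      using dim_eq_full[of W'] span_eq_iff[of W'] by (simp add: dim_UNIV)
    with 3 show ?thesis
      using unital_isometric_bilinear.quat_normalizing_isometry_dim4[OF \<nu> _ dim_z z0] by simp
  qed
qed (use assms in simp)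

theorem mainTheorem11:
  fixes \<mu> :: "'x::euclidean_space \<Rightarrow> 'y::euclidean_space \<Rightarrow> 'z::euclidean_space"
  assumes "isometric_bilinear \<mu>"
    and "DIM('x) \<le> DIM('y)" and "DIM('y) = DIM('z)" and "DIM('y) \<in> {1, 2, 4}"
  shows
    "(DIM('y) = 1 \<longrightarrow>
       (\<forall>W :: real set. subspace W \<and> dim W = DIM('x) \<longrightarrow>
          factorizes_through (*) \<mu> W \<and> (1 \<in> W \<longrightarrow> factorizes_through_normalized (*) 1 \<mu> W))) \<and>
     (DIM('y) = 2 \<longrightarrow>
       (\<forall>W :: complex set. subspace W \<and> dim W = DIM('x) \<longrightarrow>
          factorizes_through (*) \<mu> W \<and> (1 \<in> W \<longrightarrow> factorizes_through_normalized (*) 1 \<mu> W))) \<and>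
     (DIM('y) = 4 \<longrightarrow>
       (\<forall>W :: quat set. subspace W \<and> dim W = DIM('x) \<longrightarrow>
          factorizes_through qmult \<mu> W \<and> (qone \<in> W \<longrightarrow> factorizes_through_normalized qmult qone \<mu> W)))"
  using real_factorization[OF assms(1-3)] complex_factorization[OF assms(1-3)]
    quat_factorization[OF assms(1,3)] by blast

end
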